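(* If $T$ is a tree of order $p\ge 3$, then $\gamma_{[3R]}(T)\le \frac{7p}{4}$.
   Context: For a graph $\Gamma=(V,E)$ and $h:V\to\{0,1,2,3,4\}$, let $AN(v)=\{w\in N(v):h(w)\ge 1\}$, $AN[v]=AN(v)\cup\{v\}$ and $h(S)=\sum_{u\in S}h(u)$. $h$ is a triple Roman dominating function (3RDF) if every $v$ with $h(v)<3$ satisfies $h(AN[v])\ge|AN(v)|+3$. The triple Roman domination number $\gamma_{[3R]}(\Gamma)$ is the minimum weight $h(V)$ of a 3RDF of $\Gamma$. *)

theory Defs
  imports Complex_Main
begin

definition simple_graph :: "'a set \<Rightarrow> ('a \<Rightarrow> 'a \<Rightarrow> bool) \<Rightarrow> bool" where
  "simple_graph V E \<longleftrightarrow> finite V \<and> (\<forall>u v. E u v \<longrightarrow> u \<in> V \<and> v \<in> V)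
     \<and> (\<forall>u v. E u v \<longrightarrow> E v u) \<and> (\<forall>v. \<not> E v v)"

definition is_walk :: "'a set \<Rightarrow> ('a \<Rightarrow> 'a \<Rightarrow> bool) \<Rightarrow> 'a list \<Rightarrow> bool" where
  "is_walk V E xs \<longleftrightarrow> xs \<noteq> [] \<and> set xs \<subseteq> V \<and> (\<forall>i. Suc i < length xs \<longrightarrow> E (xs ! i) (xs ! Suc i))"

definition connected_graph :: "'a set \<Rightarrow> ('a \<Rightarrow> 'a \<Rightarrow> bool) \<Rightarrow> bool" where
  "connected_graph V E \<longleftrightarrow> V \<noteq> {} \<and>
     (\<forall>u\<in>V. \<forall>v\<in>V. \<exists>xs. is_walk V E xs \<and> hd xs = u \<and> last xs = v)"

definition is_cycle :: "'a set \<Rightarrow> ('a \<Rightarrow> 'a \<Rightarrow> bool) \<Rightarrow> 'a list \<Rightarrow> bool" where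
  "is_cycle V E xs \<longleftrightarrow> length xs \<ge> 3 \<and> distinct xs \<and> is_walk V E xs \<and> E (last xs) (hd xs)"

definition acyclic_graph :: "'a set \<Rightarrow> ('a \<Rightarrow> 'a \<Rightarrow> bool) \<Rightarrow> bool" where
  "acyclic_graph V E \<longleftrightarrow> (\<nexists>xs. is_cycle V E xs)"

definition is_tree :: "'a set \<Rightarrow> ('a \<Rightarrow> 'a \<Rightarrow> bool) \<Rightarrow> bool" where
  "is_tree V E \<longleftrightarrow> simple_graph V E \<and> connected_graph V E \<and> acyclic_graph V E"

definition nbhd :: "'a set \<Rightarrow> ('a \<Rightarrow> 'a \<Rightarrow> bool) \<Rightarrow> 'a \<Rightarrow> 'a set" where
  "nbhd V E v = {w \<in> V. E v w}"

definition active_nbhd :: "'a set \<Rightarrow> ('a \<Rightarrow> 'a \<Rightarrow> bool) \<Rightarrow> ('a \<Rightarrow> nat) \<Rightarrow> 'a \<Rightarrow> 'a set" where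
  "active_nbhd V E h v = {w \<in> nbhd V E v. h w \<ge> 1}"

definition is_3RDF :: "'a set \<Rightarrow> ('a \<Rightarrow> 'a \<Rightarrow> bool) \<Rightarrow> ('a \<Rightarrow> nat) \<Rightarrow> bool" where
  "is_3RDF V E h \<longleftrightarrow> (\<forall>v\<in>V. h v \<le> 4) \<and>
     (\<forall>v\<in>V. h v < 3 \<longrightarrow>
        sum h (insert v (active_nbhd V E h v)) \<ge> card (active_nbhd V E h v) + 3)"

definition weight :: "'a set \<Rightarrow> ('a \<Rightarrow> nat) \<Rightarrow> nat" where
  "weight V h = sum h V"

definition triple_roman_domination_number :: "'a set \<Rightarrow> ('a \<Rightarrow> 'a \<Rightarrow> bool) \<Rightarrow> nat" where
  "triple_roman_domination_number V E = (LEAST w. \<exists>h. is_3RDF V E h \<and> weight V h = w)"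

end

theory Submission
  imports Defs
begin

text \<open>Adding edges preserves triple Roman dominating functions, so it suffices to treat graphs
  that are edge-minimal among those without isolated vertices and without \<open>K\<^sub>2\<close>-components,
  a class containing every tree of order at least 3. Minimality forces every component
  to be a star with at least two rays, some of them subdivided once, or a path \<open>P\<^sub>4\<close>, and on
  these an explicit 3RDF \<open>h\<close> is given. The bound \<open>4 h(V) \<le> 7 |V|\<close> follows by discharging:
  every vertex starts with charge \<open>4 h(v) - 7\<close>, leaves and legs (the vertices subdividing a ray) pass
  their charge on towards the centre of their component, and afterwards no vertex has positive charge.\<close>

lemma finite_nbhd: "simple_graph V E \<Longrightarrow> finite (nbhd V E v)"
  unfolding simple_graph_def nbhd_def by auto

lemma active_condition_from_subset:
  fixes h :: "'a \<Rightarrow> nat"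
  assumes G: "simple_graph V E" and A: "A \<subseteq> nbhd V E v" "\<forall>w\<in>A. 1 \<le> h w"
    and bound: "card A + 3 \<le> h v + sum h A"
  shows "card (active_nbhd V E h v) + 3 \<le> sum h (insert v (active_nbhd V E h v))"
proof -
  let ?B = "active_nbhd V E h v"
  have fin: "finite ?B" using finite_nbhd[OF G] unfolding active_nbhd_def by auto
  have sub: "A \<subseteq> ?B" using A unfolding active_nbhd_def by auto
  have "v \<notin> ?B" using G unfolding active_nbhd_def nbhd_def simple_graph_def by auto
  then have "sum h (insert v ?B) = h v + sum h A + sum h (?B - A)"
    using fin sub by (simp add: sum.subset_diff)
  moreover have "card (?B - A) \<le> sum h (?B - A)"
    using sum_mono[of "?B - A" "\<lambda>_. 1" h] unfolding active_nbhd_def by auto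
  moreover have "card ?B = card A + card (?B - A)"
    using fin sub by (metis card_Diff_subset card_mono finite_subset le_add_diff_inverse)
  ultimately show ?thesis using bound by linarith
qed

lemma is_3RDF_mono:
  assumes G: "simple_graph V E" and sub: "\<And>a b. E' a b \<Longrightarrow> E a b" and h: "is_3RDF V E' h"
  shows "is_3RDF V E h"
  unfolding is_3RDF_def
proof (intro conjI ballI impI)
  fix v assume "v \<in> V" then show "h v \<le> 4" using h unfolding is_3RDF_def by auto
next
  fix v assume v: "v \<in> V" "h v < 3"
  let ?A = "active_nbhd V E' h v"
  have "\<not> E' v v" using G sub unfolding simple_graph_def by blast
  moreover have "finite ?A" using G sub unfolding active_nbhd_def nbhd_def simple_graph_def by auto
  ultimately have "card ?A + 3 \<le> h v + sum h ?A"
    using h v unfolding is_3RDF_def active_nbhd_def nbhd_def by auto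
  moreover have "?A \<subseteq> nbhd V E v" using sub unfolding active_nbhd_def nbhd_def by auto
  ultimately show "card (active_nbhd V E h v) + 3 \<le> sum h (insert v (active_nbhd V E h v))"
    using active_condition_from_subset[OF G] unfolding active_nbhd_def by blast
qed

lemma sum_nonpos_by_discharging:
  fixes \<phi> :: "'a \<Rightarrow> 'b::ordered_ab_group_add" and t :: "'a \<Rightarrow> 'a \<Rightarrow> 'b"
  assumes "\<And>v. v \<in> V \<Longrightarrow> \<phi> v - (\<Sum>w\<in>V. t v w) + (\<Sum>w\<in>V. t w v) \<le> 0"
  shows "(\<Sum>v\<in>V. \<phi> v) \<le> 0"
proof -
  have "(\<Sum>v\<in>V. \<Sum>w\<in>V. t w v) = (\<Sum>v\<in>V. \<Sum>w\<in>V. t v w)" by (rule sum.swap)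
  then have "(\<Sum>v\<in>V. \<phi> v) = (\<Sum>v\<in>V. \<phi> v - (\<Sum>w\<in>V. t v w) + (\<Sum>w\<in>V. t w v))"
    by (simp add: sum.distrib sum_subtractf)
  also have "\<dots> \<le> 0" by (rule sum_nonpos) (rule assms)
  finally show ?thesis .
qed

text \<open>No isolated vertices and no \<open>K\<^sub>2\<close>-components, i.e. every component has at least three
  vertices.\<close>

definition no_small_components :: "'a set \<Rightarrow> ('a \<Rightarrow> 'a \<Rightarrow> bool) \<Rightarrow> bool" where
  "no_small_components V E \<longleftrightarrow> simple_graph V E \<and> (\<forall>v\<in>V. \<exists>w. E v w) \<and>
     (\<forall>a b. E a b \<longrightarrow> (\<exists>c. c \<noteq> b \<and> E a c) \<or> (\<exists>c. c \<noteq> a \<and> E b c))"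

lemma walk_exits_set:
  "is_walk V E xs \<Longrightarrow> hd xs \<in> S \<Longrightarrow> last xs \<notin> S \<Longrightarrow> \<exists>p\<in>S. \<exists>q. q \<notin> S \<and> E p q"
proof (induction xs)
  case Nil
  then show ?case by (simp add: is_walk_def)
next
  case (Cons x ys)
  then have "ys \<noteq> []" by auto
  then have "E x (hd ys)" "is_walk V E ys"
    using Cons.prems(1) unfolding is_walk_def by (auto simp: hd_conv_nth)
  then show ?case using Cons \<open>ys \<noteq> []\<close> by (cases "hd ys \<in> S") auto
qed

lemma connected_no_small_components:
  assumes G: "simple_graph V E" and conn: "connected_graph V E" and three: "3 \<le> card V"
  shows "no_small_components V E"
proof -
  have escape: "\<exists>p\<in>S. \<exists>q. q \<notin> S \<and> E p q" if "S \<subseteq> V" "card S \<le> 2" "S \<noteq> {}" for S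
  proof -
    have "finite S" using that G finite_subset unfolding simple_graph_def by blast
    then have "\<not> V \<subseteq> S" using card_mono[of S V] that three by linarith
    then obtain w where w: "w \<in> V - S" by blast
    obtain s where s: "s \<in> S" using \<open>S \<noteq> {}\<close> by auto
    then obtain xs where "is_walk V E xs" "hd xs = s" "last xs = w"
      using conn w \<open>S \<subseteq> V\<close> unfolding connected_graph_def by blast
    then show ?thesis using walk_exits_set s w by blast
  qed
  have "\<exists>w. E v w" if "v \<in> V" for v
    using escape[of "{v}"] that by auto
  moreover have "(\<exists>c. c \<noteq> b \<and> E a c) \<or> (\<exists>c. c \<noteq> a \<and> E b c)" if "E a b" for a b
  proof -
    have "{a, b} \<subseteq> V" using that G unfolding simple_graph_def by blast
    moreover have "card {a, b} \<le> 2" by (simp add: card_insert_if)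
    ultimately show ?thesis using escape[of "{a, b}"] that by blast
  qed
  ultimately show ?thesis using G unfolding no_small_components_def by blast
qed

definition delete_edge :: "('a \<Rightarrow> 'a \<Rightarrow> bool) \<Rightarrow> 'a \<Rightarrow> 'a \<Rightarrow> 'a \<Rightarrow> 'a \<Rightarrow> bool" where
  "delete_edge E u v = (\<lambda>a b. E a b \<and> {a, b} \<noteq> {u, v})"

lemma card_edges_delete_edge:
  assumes "simple_graph V E" "E u v"
  shows "card {(a, b). delete_edge E u v a b} < card {(a, b). E a b}"
proof (rule psubset_card_mono)
  have "{(a, b). E a b} \<subseteq> V \<times> V" using assms(1) unfolding simple_graph_def by auto
  then show "finite {(a, b). E a b}"
    using assms(1) unfolding simple_graph_def by (meson finite_SigmaI finite_subset)
  show "{(a, b). delete_edge E u v a b} \<subset> {(a, b). E a b}"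
    using assms(2) unfolding delete_edge_def by auto
qed

lemma no_small_components_delete_edge:
  assumes G: "no_small_components V E" and uv: "E u v"
    and keep: "\<And>a b. {a, b} = {u, v} \<Longrightarrow> \<exists>x. x \<noteq> b \<and> E a x"
    and no_K2: "\<And>a b x. {a, b} = {u, v} \<Longrightarrow> x \<noteq> b \<Longrightarrow> E a x \<Longrightarrow>
       (\<exists>y. y \<noteq> b \<and> y \<noteq> x \<and> E a y) \<or> (\<exists>y. y \<noteq> a \<and> E x y)"
  shows "no_small_components V (delete_edge E u v)"
proof -
  let ?E = "delete_edge E u v"
  have sg: "simple_graph V E" using G unfolding no_small_components_def by blast
  then have "u \<noteq> v" using uv unfolding simple_graph_def by blast
  then have at_end: "?E a c \<longleftrightarrow> E a c \<and> c \<noteq> b" if "{a, b} = {u, v}" for a b c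
    using that unfolding delete_edge_def by (auto simp: doubleton_eq_iff)
  have off_ends: "?E a c \<longleftrightarrow> E a c" if "a \<notin> {u, v}" for a c
    using that unfolding delete_edge_def by auto
  have sg': "simple_graph V ?E"
    using sg unfolding simple_graph_def delete_edge_def by (auto simp: insert_commute)
  have other_end: "\<exists>b. {a, b} = {u, v}" if "a \<in> {u, v}" for a
    using that by (auto simp: insert_commute)
  have "\<exists>w. ?E z w" if "z \<in> V" for z
  proof (cases "z \<in> {u, v}")
    case True
    then obtain b where "{z, b} = {u, v}" using other_end by blast
    then show ?thesis using keep at_end by blast
  next
    case False
    then show ?thesis using G that off_ends unfolding no_small_components_def by blast
  qed
  moreover have end_edge: "(\<exists>c. c \<noteq> b \<and> ?E a c) \<or> (\<exists>c. c \<noteq> a \<and> ?E b c)"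
    if ab: "?E a b" "a \<in> {u, v}" for a b
  proof -
    obtain a' where a': "{a, a'} = {u, v}" using other_end ab(2) by blast
    then have "E a b" "b \<noteq> a'" using ab(1) at_end by blast+
    moreover have "b \<notin> {u, v}" using a' calculation sg unfolding simple_graph_def by auto
    ultimately show ?thesis using no_K2[OF a'] at_end[OF a'] off_ends by metis
  qed
  have "(\<exists>c. c \<noteq> b \<and> ?E a c) \<or> (\<exists>c. c \<noteq> a \<and> ?E b c)" if ab: "?E a b" for a b
  proof -
    consider "a \<in> {u, v}" | "b \<in> {u, v}" | "a \<notin> {u, v}" "b \<notin> {u, v}" by blast
    then show ?thesis
    proof cases
      case 1
      then show ?thesis using end_edge ab by blast
    next
      case 2
      then show ?thesis using end_edge[of b a] ab sg' unfolding simple_graph_def by blast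
    next
      case 3
      then show ?thesis using G ab off_ends unfolding no_small_components_def by metis
    qed
  qed
  ultimately show ?thesis using sg' unfolding no_small_components_def by blast
qed

locale edge_minimal =
  fixes V :: "'a set" and E :: "'a \<Rightarrow> 'a \<Rightarrow> bool"
  assumes no_small: "no_small_components V E"
    and minimal: "\<And>u v. E u v \<Longrightarrow> \<not> no_small_components V (delete_edge E u v)"
begin

abbreviation N :: "'a \<Rightarrow> 'a set" where "N v \<equiv> nbhd V E v"

lemma simple: "simple_graph V E"
  using no_small unfolding no_small_components_def by blast

lemma in_N_iff: "w \<in> N v \<longleftrightarrow> E v w"
  using simple unfolding nbhd_def simple_graph_def by auto

lemma N_sym: "w \<in> N v \<Longrightarrow> v \<in> N w"
  using simple unfolding in_N_iff simple_graph_def by blast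

lemma finite_N: "finite (N v)"
  using finite_nbhd[OF simple] .

lemma N_nonempty: "v \<in> V \<Longrightarrow> N v \<noteq> {}"
  using no_small in_N_iff unfolding no_small_components_def by blast

lemma edge_end_cases:
  assumes uv: "E u v"
  shows "N u = {v} \<or> (\<exists>x. x \<noteq> v \<and> N u = {v, x} \<and> N x = {u}) \<or>
         N v = {u} \<or> (\<exists>x. x \<noteq> u \<and> N v = {u, x} \<and> N x = {v})"
proof (rule ccontr)
  assume not_end: "\<not> ?thesis"
  have end_edge: "b \<in> N a" if "{a, b} = {u, v}" for a b
    using that uv N_sym in_N_iff by (auto simp: doubleton_eq_iff)
  have "no_small_components V (delete_edge E u v)"
  proof (rule no_small_components_delete_edge[OF no_small uv])
    fix a b assume ab: "{a, b} = {u, v}"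
    then have "N a \<noteq> {b}" using not_end by (auto simp: doubleton_eq_iff)
    then show "\<exists>x. x \<noteq> b \<and> E a x" using end_edge[OF ab] in_N_iff by blast
  next
    fix a b x assume ab: "{a, b} = {u, v}" and x: "x \<noteq> b" "E a x"
    have "\<not> (N a = {b, x} \<and> N x = {a})" using not_end ab x(1) by (auto simp: doubleton_eq_iff)
    then show "(\<exists>y. y \<noteq> b \<and> y \<noteq> x \<and> E a y) \<or> (\<exists>y. y \<noteq> a \<and> E x y)"
      using end_edge[OF ab] x(2) N_sym[of x a] in_N_iff by blast
  qed
  then show False using minimal[OF uv] by blast
qed

definition leaf :: "'a \<Rightarrow> bool" where
  "leaf v \<longleftrightarrow> (\<exists>u. N v = {u})"

definition leg :: "'a \<Rightarrow> bool" where
  "leg x \<longleftrightarrow> (\<exists>l w. N x = {l, w} \<and> leaf l \<and> \<not> leaf w)"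

definition center :: "'a \<Rightarrow> bool" where
  "center c \<longleftrightarrow> c \<in> V \<and> \<not> leaf c \<and> \<not> leg c"

lemma leaf_N_eq: "leaf l \<Longrightarrow> u \<in> N l \<Longrightarrow> N l = {u}"
  unfolding leaf_def by auto

lemma leaf_neighbour_not_leaf:
  assumes l: "leaf l" and u: "u \<in> N l"
  shows "\<not> leaf u"
proof
  assume "leaf u"
  then have "N u = {l}" using leaf_N_eq N_sym[OF u] by blast
  moreover have "N l = {u}" using leaf_N_eq[OF l u] .
  ultimately show False
    using no_small u in_N_iff unfolding no_small_components_def by blast
qed

lemma leg_not_leaf: "leg x \<Longrightarrow> \<not> leaf x"
  unfolding leg_def leaf_def by (metis doubleton_eq_iff singleton_insert_inj_eq)

lemma center_card_N:
  assumes "center c"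
  shows "2 \<le> card (N c)"
proof -
  have "card (N c) \<noteq> 0" using assms N_nonempty finite_N unfolding center_def by simp
  moreover have "card (N c) \<noteq> 1"
    using assms unfolding center_def leaf_def by (auto simp: card_1_singleton_iff)
  ultimately show ?thesis by linarith
qed

lemma center_neighbour:
  assumes c: "center c" and n: "n \<in> N c"
  shows "leaf n \<or> (leg n \<and> (\<exists>l. N n = {l, c} \<and> leaf l))"
proof -
  have "\<not> leaf c" "\<not> leg c" using c unfolding center_def by auto
  from edge_end_cases n in_N_iff consider "N c = {n}" | x where "N c = {n, x}" "N x = {c}"
    | "N n = {c}" | x where "x \<noteq> c" "N n = {c, x}" "N x = {n}"
    by blast
  then show ?thesis
  proof cases
    case 1
    then show ?thesis using \<open>\<not> leaf c\<close> unfolding leaf_def by blast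
  next
    case (2 x)
    then have "leaf x" unfolding leaf_def by blast
    then have "leaf n" using \<open>\<not> leg c\<close> 2(1) unfolding leg_def by (metis insert_commute)
    then show ?thesis ..
  next
    case 3
    then show ?thesis unfolding leaf_def by blast
  next
    case (4 x)
    then have "leaf x" unfolding leaf_def by blast
    moreover have "N n = {x, c}" using 4 by (simp add: insert_commute)
    ultimately show ?thesis using \<open>\<not> leaf c\<close> unfolding leg_def by blast
  qed
qed

lemma leg_stem:
  assumes x: "leg x" "N x = {l, w}" "leaf l" "\<not> leaf w"
  shows "center w \<or> (leg w \<and> (\<exists>l'. N w = {l', x} \<and> leaf l'))"
proof (cases "leg w")
  case True
  then obtain l' w' where w': "N w = {l', w'}" "leaf l'" "\<not> leaf w'" unfolding leg_def by blast
  have "x \<in> N w" using x(2) N_sym by blast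
  then have "x = w'" using w' leg_not_leaf[OF x(1)] by auto
  then show ?thesis using True w' by blast
next
  case False
  have "w \<in> V" using x(2) unfolding nbhd_def by blast
  then show ?thesis using False x(4) unfolding center_def by blast
qed

text \<open>A symmetric choice of an endpoint of an edge; on a \<open>P\<^sub>4\<close> component it selects the leg
  that gets weight 4.\<close>

definition pick :: "'a \<Rightarrow> 'a \<Rightarrow> 'a" where
  "pick x w = (SOME z. z \<in> {x, w})"

lemma pick_commute: "pick x w = pick w x"
  unfolding pick_def by (simp add: insert_commute)

lemma pick_cases: "pick x w = x \<or> pick x w = w"
proof -
  have "pick x w \<in> {x, w}" unfolding pick_def by (rule someI[of _ x]) simp
  then show ?thesis by simp
qed

definition h_center :: "'a \<Rightarrow> nat" where
  "h_center c = (if \<exists>l\<in>N c. leaf l then 4 else if 3 \<le> card (N c) then 3 else 0)"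

definition h_leg :: "'a \<Rightarrow> nat" where
  "h_leg x = (if \<exists>w\<in>N x. (center w \<and> h_center w = 0) \<or> (leg w \<and> pick x w = x) then 4 else 0)"

definition h :: "'a \<Rightarrow> nat" where
  "h v = (if center v then h_center v else if leg v then h_leg v
          else if \<exists>u\<in>N v. leg u \<and> h_leg u = 0 then 3 else 0)"

lemma leg_not_center: "leg x \<Longrightarrow> \<not> center x"
  and leaf_not_center: "leaf l \<Longrightarrow> \<not> center l"
  unfolding center_def by blast+

lemma h_center_eq: "center c \<Longrightarrow> h c = h_center c"
  unfolding h_def by simp

lemma h_leg_eq: "leg x \<Longrightarrow> h x = h_leg x"
  unfolding h_def using leg_not_center by simp

lemma h_leaf:
  assumes "leaf l" "N l = {u}"
  shows "h l = (if leg u \<and> h u = 0 then 3 else 0)"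
  using assms leaf_not_center leg_not_leaf h_leg_eq unfolding h_def by auto

lemma h_leg_center:
  assumes "N x = {l, w}" "leaf l" "center w"
  shows "h x = (if h w = 0 then 4 else 0)"
proof -
  have "leg x" using assms unfolding leg_def center_def by blast
  moreover have "\<not> center l" "\<not> leg l" "\<not> leg w"
    using assms leaf_not_center leg_not_leaf unfolding center_def by blast+
  ultimately show ?thesis using assms h_leg_eq h_center_eq unfolding h_leg_def by auto
qed

lemma h_leg_leg:
  assumes "N x = {l, w}" "leaf l" "leg w"
  shows "h x = (if pick x w = x then 4 else 0)"
proof -
  have "leg x" using assms leg_not_leaf unfolding leg_def by blast
  moreover have "\<not> center l" "\<not> leg l" "\<not> center w"
    using assms leaf_not_center leg_not_leaf leg_not_center by blast+
  ultimately show ?thesis using assms h_leg_eq unfolding h_leg_def by auto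
qed

lemma h_leg_cases: "leg x \<Longrightarrow> h x = 0 \<or> h x = 4"
  using h_leg_eq unfolding h_leg_def by simp

lemma h_le_4: "h v \<le> 4"
  unfolding h_def h_center_def h_leg_def by simp

abbreviation triple_dominated :: "'a \<Rightarrow> bool" where
  "triple_dominated v \<equiv> card (active_nbhd V E h v) + 3 \<le> sum h (insert v (active_nbhd V E h v))"

lemma triple_dominatedI:
  "A \<subseteq> N v \<Longrightarrow> \<forall>w\<in>A. 1 \<le> h w \<Longrightarrow> card A + 3 \<le> h v + sum h A \<Longrightarrow> triple_dominated v"
  using active_condition_from_subset[OF simple] .

lemma leaf_triple_dominated:
  assumes v: "leaf v" "h v < 3"
  shows "triple_dominated v"
proof -
  obtain u where u: "N v = {u}" using v(1) unfolding leaf_def by blast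
  have "h u = 4"
  proof (cases "leg u")
    case True
    then show ?thesis using h_leaf[OF v(1) u] v(2) h_leg_cases[OF True] by (auto split: if_splits)
  next
    case False
    have "u \<in> V" "\<not> leaf u" using u leaf_neighbour_not_leaf[OF v(1)] unfolding nbhd_def by auto
    then have "center u" using False unfolding center_def by blast
    moreover have "v \<in> N u" using u N_sym by blast
    ultimately show ?thesis using h_center_eq v(1) unfolding h_center_def by auto
  qed
  then show ?thesis using u by (intro triple_dominatedI[of "{u}"]) auto
qed

lemma leg_triple_dominated:
  assumes v: "leg v" "h v < 3"
  shows "triple_dominated v"
proof -
  obtain l w where lw: "N v = {l, w}" "leaf l" "\<not> leaf w" using v(1) unfolding leg_def by blast
  have hv: "h v = 0" using v h_leg_cases by fastforce
  have "N l = {v}" using lw leaf_N_eq N_sym by blast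
  then have hl: "h l = 3" using h_leaf[OF lw(2)] v(1) hv by simp
  consider "center w" | l' where "leg w" "N w = {l', v}" "leaf l'"
    using leg_stem[OF v(1) lw] by blast
  then show ?thesis
  proof cases
    case 1
    then have "h w \<noteq> 0" using h_leg_center[OF lw(1,2)] hv by (auto split: if_splits)
    then have "3 \<le> h w" using h_center_eq[OF 1] unfolding h_center_def by (auto split: if_splits)
    moreover have "l \<noteq> w" using lw by blast
    ultimately show ?thesis using lw hv hl by (intro triple_dominatedI[of "{l, w}"]) auto
  next
    case 2
    then have "pick w v = w" using h_leg_leg[OF lw(1,2)] hv pick_cases pick_commute by fastforce
    then have "h w = 4" using h_leg_leg[OF 2(2,3) v(1)] by simp
    then show ?thesis using lw hv by (intro triple_dominatedI[of "{w}"]) auto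
  qed
qed

lemma center_triple_dominated:
  assumes v: "center v" "h v < 3"
  shows "triple_dominated v"
proof -
  have "h_center v = 0" using v h_center_eq unfolding h_center_def by (auto split: if_splits)
  then have hv: "h v = 0" and no_leaf: "\<forall>n\<in>N v. \<not> leaf n"
    using h_center_eq[OF v(1)] unfolding h_center_def by (auto split: if_splits)
  obtain n where n: "n \<in> N v" using N_nonempty v(1) unfolding center_def by blast
  then obtain l where "N n = {l, v}" "leaf l"
    using center_neighbour[OF v(1)] no_leaf by blast
  then have "h n = 4" using h_leg_center v(1) hv by simp
  then show ?thesis using n hv by (intro triple_dominatedI[of "{n}"]) auto
qed

lemma is_3RDF_h: "is_3RDF V E h"
  unfolding is_3RDF_def
proof (intro conjI ballI impI)
  fix v assume "v \<in> V" "h v < 3"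
  then consider "leaf v" | "leg v" | "center v" unfolding center_def by blast
  then show "triple_dominated v"
    using \<open>h v < 3\<close> leaf_triple_dominated leg_triple_dominated center_triple_dominated by cases
qed (rule h_le_4)

definition charge :: "'a \<Rightarrow> int" where
  "charge v = 4 * int (h v) - 7"

definition pendant :: "'a \<Rightarrow> 'a" where
  "pendant x = (SOME l. l \<in> N x \<and> leaf l)"

text \<open>A picked leg of a \<open>P\<^sub>4\<close> sends its charge to the other leg, so all charge of a component
  collects at its centre or at the unpicked leg of a \<open>P\<^sub>4\<close>.\<close>

definition transfer :: "'a \<Rightarrow> 'a \<Rightarrow> int" where
  "transfer v w =
     (if E v w \<and> leaf v then charge v
      else if E v w \<and> leg v \<and> \<not> leaf w \<and> (leg w \<longrightarrow> pick v w = v) then charge v + charge (pendant v)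
      else 0)"

lemma pendant_eq: "N x = {l, w} \<Longrightarrow> leaf l \<Longrightarrow> \<not> leaf w \<Longrightarrow> pendant x = l"
  unfolding pendant_def by (rule some_equality) auto

lemma leg_pair_charge:
  assumes x: "leg x" and l: "N x = {l, w}" "leaf l"
  shows "charge x + charge l = (if h x = 0 then -2 else 2)"
proof -
  have "N l = {x}" using l leaf_N_eq N_sym by blast
  then have "h l = (if h x = 0 then 3 else 0)" using h_leaf[OF l(2)] x by simp
  then show ?thesis using h_leg_cases[OF x] unfolding charge_def by auto
qed

lemma transfers_out: "(\<Sum>w\<in>V. transfer v w) = (\<Sum>w\<in>N v. transfer v w)"
  using simple unfolding simple_graph_def
  by (intro sum.mono_neutral_right) (auto simp: transfer_def nbhd_def)

lemma transfers_in: "(\<Sum>w\<in>V. transfer w v) = (\<Sum>w\<in>N v. transfer w v)"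
  using simple unfolding simple_graph_def
  by (intro sum.mono_neutral_right) (auto simp: transfer_def nbhd_def)

abbreviation final_charge :: "'a \<Rightarrow> int" where
  "final_charge v \<equiv> charge v - (\<Sum>w\<in>N v. transfer v w) + (\<Sum>w\<in>N v. transfer w v)"

lemma leaf_final_charge:
  assumes v: "leaf v"
  shows "final_charge v = 0"
proof -
  obtain u where u: "N v = {u}" using v unfolding leaf_def by blast
  then have "u \<in> N v" "v \<in> N u" using N_sym by auto
  then have "E v u" "E u v" "\<not> leaf u" using in_N_iff leaf_neighbour_not_leaf[OF v] by auto
  then show ?thesis using u v unfolding transfer_def by simp
qed

lemma leg_final_charge:
  assumes v: "leg v"
  shows "final_charge v = 0"
proof -
  obtain l w where lw: "N v = {l, w}" "leaf l" "\<not> leaf w" using v unfolding leg_def by blast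
  have "l \<noteq> w" using lw by blast
  have "E v l" "E l v" "E v w" "E w v" using lw(1) in_N_iff N_sym by blast+
  then have "transfer v l = 0" "transfer l v = charge l"
    using lw(2) leg_not_leaf[OF v] unfolding transfer_def by auto
  then have sums: "final_charge v = charge v + charge l - transfer v w + transfer w v"
    using lw(1) \<open>l \<noteq> w\<close> by simp
  have pendant_v: "pendant v = l" using pendant_eq[OF lw] .
  consider "center w" | l' where "leg w" "N w = {l', v}" "leaf l'"
    using leg_stem[OF v lw] by blast
  then show ?thesis
  proof cases
    case 1
    then have "transfer v w = charge v + charge l" "transfer w v = 0"
      using \<open>E v w\<close> v leg_not_leaf[OF v] lw(3) pendant_v unfolding transfer_def center_def by auto
    then show ?thesis using sums by simp
  next
    case 2
    show ?thesis
    proof (cases "pick v w = v")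
      case True
      then have "pick w v \<noteq> w" using pick_commute \<open>l \<noteq> w\<close> lw(1) \<open>E w v\<close> simple
        unfolding simple_graph_def by metis
      then have "transfer v w = charge v + charge l" "transfer w v = 0"
        using \<open>E v w\<close> True v lw(3) leg_not_leaf[OF v] pendant_v unfolding transfer_def by auto
      then show ?thesis using sums by simp
    next
      case False
      then have "pick w v = w" using pick_cases pick_commute by metis
      then have "transfer v w = 0" "transfer w v = charge w + charge l'"
        using False \<open>E w v\<close> 2 leg_not_leaf[OF v] lw(3) pendant_eq[OF 2(2,3)]
        unfolding transfer_def by auto
      moreover have "h v = 0" "h w = 4"
        using h_leg_leg[OF lw(1,2) 2(1)] h_leg_leg[OF 2(2,3) v] False \<open>pick w v = w\<close> by auto
      ultimately show ?thesis
        using sums leg_pair_charge[OF v lw(1,2)] leg_pair_charge[OF 2] by simp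
    qed
  qed
qed

lemma transfer_to_center:
  assumes c: "center c" and n: "n \<in> N c"
  shows "transfer n c = (if leaf n then -7 else if h c = 0 then 2 else -2)"
proof -
  have "E n c" "\<not> leaf c" "\<not> leg c" using c n in_N_iff N_sym unfolding center_def by auto
  from center_neighbour[OF c n] consider "leaf n" | l where "leg n" "N n = {l, c}" "leaf l"
    by blast
  then show ?thesis
  proof cases
    case 1
    have "N n = {c}" using leaf_N_eq[OF 1 N_sym[OF n]] .
    then have "h n = 0" using h_leaf[OF 1] \<open>\<not> leg c\<close> by simp
    then show ?thesis using 1 \<open>E n c\<close> unfolding transfer_def charge_def by simp
  next
    case 2
    have "transfer n c = charge n + charge l"
      using 2 \<open>E n c\<close> \<open>\<not> leaf c\<close> \<open>\<not> leg c\<close> leg_not_leaf pendant_eq[OF 2(2,3)]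
      unfolding transfer_def by auto
    then show ?thesis using 2 leg_pair_charge h_leg_center[OF 2(2,3) c] leg_not_leaf by auto
  qed
qed

lemma center_final_charge:
  assumes c: "center c"
  shows "final_charge c \<le> 0"
proof -
  have out: "(\<Sum>w\<in>N c. transfer c w) = 0"
    using c unfolding center_def transfer_def by simp
  have d: "2 \<le> card (N c)" using center_card_N[OF c] .
  consider l0 where "l0 \<in> N c" "leaf l0" "h c = 4" | "\<forall>n\<in>N c. \<not> leaf n" "h c = 3" "3 \<le> card (N c)"
    | "\<forall>n\<in>N c. \<not> leaf n" "h c = 0" "card (N c) = 2"
    using h_center_eq[OF c] d unfolding h_center_def by (auto split: if_splits)
  then show ?thesis
  proof cases
    case 1
    have "(\<Sum>n\<in>N c. transfer n c) \<le> (\<Sum>n\<in>N c. if n = l0 then -7 else -2)"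
      using transfer_to_center[OF c] 1 by (intro sum_mono) auto
    also have "\<dots> = - 7 - 2 * (int (card (N c)) - 1)"
      using 1(1) finite_N d by (simp add: sum.remove[of _ l0] of_nat_diff)
    finally show ?thesis using out d 1(3) unfolding charge_def by simp
  next
    case 2
    then have "(\<Sum>n\<in>N c. transfer n c) = - 2 * int (card (N c))"
      using transfer_to_center[OF c] by simp
    then show ?thesis using out 2 unfolding charge_def by simp
  next
    case 3
    then have "(\<Sum>n\<in>N c. transfer n c) = 4"
      using transfer_to_center[OF c] by simp
    then show ?thesis using out 3 unfolding charge_def by simp
  qed
qed

lemma weight_h: "4 * weight V h \<le> 7 * card V"
proof -
  have "(\<Sum>v\<in>V. charge v) \<le> 0"
  proof (rule sum_nonpos_by_discharging)
    fix v assume "v \<in> V"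
    then consider "leaf v" | "leg v" | "center v" unfolding center_def by blast
    then show "charge v - (\<Sum>w\<in>V. transfer v w) + (\<Sum>w\<in>V. transfer w v) \<le> 0"
      unfolding transfers_out transfers_in
      using leaf_final_charge leg_final_charge center_final_charge by cases auto
  qed
  moreover have "(\<Sum>v\<in>V. charge v) = 4 * int (weight V h) - 7 * int (card V)"
    unfolding charge_def weight_def by (simp add: sum_subtractf sum_distrib_left)
  ultimately show ?thesis by linarith
qed

end

lemma no_small_components_3RDF:
  assumes "no_small_components V E"
  shows "\<exists>h. is_3RDF V E h \<and> 4 * weight V h \<le> 7 * card V"
  using assms
proof (induction "card {(a, b). E a b}" arbitrary: E rule: less_induct)
  case less
  have simple: "simple_graph V E" using less.prems unfolding no_small_components_def by blast
  show ?case
  proof (cases "\<exists>u v. E u v \<and> no_small_components V (delete_edge E u v)")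
    case True
    then obtain u v where uv: "E u v" "no_small_components V (delete_edge E u v)" by blast
    then obtain h where h: "is_3RDF V (delete_edge E u v) h" "4 * weight V h \<le> 7 * card V"
      using less.hyps[OF card_edges_delete_edge[OF simple uv(1)]] by blast
    have "is_3RDF V E h" by (rule is_3RDF_mono[OF simple _ h(1)]) (simp add: delete_edge_def)
    then show ?thesis using h(2) by blast
  next
    case False
    then interpret edge_minimal V E
      using less.prems by unfold_locales blast+
    show ?thesis using is_3RDF_h weight_h by blast
  qed
qed

theorem theorem13:
  fixes V :: "'a set" and E :: "'a \<Rightarrow> 'a \<Rightarrow> bool"
  assumes "is_tree V E" and "card V \<ge> 3"
  shows "real (triple_roman_domination_number V E) \<le> 7 * real (card V) / 4"
proof -
  have "no_small_components V E"
    using assms connected_no_small_components unfolding is_tree_def by blast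
  then obtain h where h: "is_3RDF V E h" "4 * weight V h \<le> 7 * card V"
    using no_small_components_3RDF by blast
  then have "triple_roman_domination_number V E \<le> weight V h"
    unfolding triple_roman_domination_number_def by (blast intro: Least_le)
  then have "4 * real (triple_roman_domination_number V E) \<le> 7 * real (card V)"
    using h(2) by linarith
  then show ?thesis by simp
qed
end
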